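(* Let $\pi\colon X\to Y=\mathbb P^1$ be a $\mathbb P^r$-bundle over $\mathbb P^1$, regarded as a toric morphism of toric varieties, and let $\Delta$ be a torus invariant horizontal effective $\mathbb R$-divisor on $X$ such that every coefficient of $\Delta$ is less than one. If there exists an extremal ray $R$ of $\mathrm{NE}(X)$ such that $(K_{X/Y}+\Delta)\cdot R=0$, then $X=\mathbb P^r\times \mathbb P^1$ and $\pi$ is the second projection.
   Context: Work over $\mathbb C$. Every $\mathbb P^r$-bundle over $\mathbb P^1$ is of the form $\mathbb P_{\mathbb P^1}(\mathcal O(c_0)\oplus\cdots\oplus\mathcal O(c_r))$ and carries the corresponding toric structure making $\pi$ toric. $K_{X/Y}=K_X-\pi^*K_Y$ is the relative canonical divisor; a divisor is horizontal if each of its components dominates $Y$; $\mathrm{NE}(X)$ is the cone of curves. *)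

theory Defs
  imports Complex_Main
begin

text \<open>A fan in N = Z^n is given by a set I of ray indices, primitive ray generators
  u :: 'i => (nat => int) (vectors supported on coordinates 0..n-1), and the set C of
  maximal cones, each given as the set of its rays (the fans used here are smooth and
  complete, so every maximal cone has exactly n rays).\<close>

text \<open>Wall curves: for two maximal cones sigma, sigma' meeting in a common facet tau
  (n-1 common rays) the torus invariant curve V(tau) has intersection numbers with the
  torus invariant prime divisors D_rho given by the wall relation
  u_rho + u_rho' + sum_{rho'' in tau} b_rho'' u_rho'' = 0, i.e. D_rho . V(tau) = 1 for
  the two rays outside tau, b_rho'' for rays of tau, and 0 otherwise.
  A 1-cycle class is represented by its vector of intersection numbers with the D_rho.\<close>

definition wall_vec :: "nat \<Rightarrow> ('i \<Rightarrow> nat \<Rightarrow> int) \<Rightarrow> 'i set set \<Rightarrow> ('i \<Rightarrow> real) \<Rightarrow> bool" where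
  "wall_vec n u C b \<longleftrightarrow>
     (\<exists>\<sigma>\<in>C. \<exists>\<sigma>'\<in>C. card \<sigma> = n \<and> card \<sigma>' = n \<and> card (\<sigma> \<inter> \<sigma>') + 1 = n \<and>
        (\<forall>\<rho>. \<rho> \<notin> \<sigma> \<union> \<sigma>' \<longrightarrow> b \<rho> = 0) \<and>
        (\<forall>\<rho>\<in>\<sigma> - \<sigma>'. b \<rho> = 1) \<and> (\<forall>\<rho>\<in>\<sigma>' - \<sigma>. b \<rho> = 1) \<and>
        (\<forall>k<n. (\<Sum>\<rho>\<in>\<sigma> \<union> \<sigma>'. b \<rho> * real_of_int (u \<rho> k)) = 0))"

definition cone_gen :: "('i \<Rightarrow> real) set \<Rightarrow> ('i \<Rightarrow> real) set" where
  "cone_gen G = {z. \<exists>S l. finite S \<and> S \<subseteq> G \<and> (\<forall>g\<in>S. l g \<ge> 0) \<and>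
                        z = (\<lambda>\<rho>. \<Sum>g\<in>S. l g * g \<rho>)}"

text \<open>Cone of curves NE(X) of a complete toric variety: generated by the classes of
  the torus invariant curves (toric cone theorem); finitely generated, hence closed.\<close>

definition NE_cone :: "nat \<Rightarrow> ('i \<Rightarrow> nat \<Rightarrow> int) \<Rightarrow> 'i set set \<Rightarrow> ('i \<Rightarrow> real) set" where
  "NE_cone n u C = cone_gen {b. wall_vec n u C b}"

definition extremal_ray :: "('i \<Rightarrow> real) set \<Rightarrow> ('i \<Rightarrow> real) set \<Rightarrow> bool" where
  "extremal_ray K R \<longleftrightarrow>
     (\<exists>z\<in>K. z \<noteq> (\<lambda>_. 0) \<and> R = {(\<lambda>\<rho>. t * z \<rho>) | t. t \<ge> 0}) \<and>
     (\<forall>a\<in>K. \<forall>b\<in>K. (\<lambda>\<rho>. a \<rho> + b \<rho>) \<in> R \<longrightarrow> a \<in> R \<and> b \<in> R)"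

definition intersect :: "'i set \<Rightarrow> ('i \<Rightarrow> real) \<Rightarrow> ('i \<Rightarrow> real) \<Rightarrow> real" where
  "intersect I D z = (\<Sum>\<rho>\<in>I. D \<rho> * z \<rho>)"

text \<open>The toric morphism pi : X -> P^1 is induced by the projection N = Z^n -> Z onto the
  last coordinate (index n-1), the fan of P^1 having rays 1 and -1.
  K_X = - sum D_rho.  K_{P^1} = -D_1 - D_{-1} has support function phi(t) = |t|, so
  pi^* K_{P^1} = - sum_rho |u_rho(n-1)| D_rho.\<close>

definition canonical_div :: "('i \<Rightarrow> real)" where
  "canonical_div = (\<lambda>\<rho>. -1)"

definition pullback_KY :: "nat \<Rightarrow> ('i \<Rightarrow> nat \<Rightarrow> int) \<Rightarrow> ('i \<Rightarrow> real)" where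
  "pullback_KY n u = (\<lambda>\<rho>. - \<bar>real_of_int (u \<rho> (n - 1))\<bar>)"

definition rel_canonical :: "nat \<Rightarrow> ('i \<Rightarrow> nat \<Rightarrow> int) \<Rightarrow> ('i \<Rightarrow> real)" where
  "rel_canonical n u = (\<lambda>\<rho>. canonical_div \<rho> - pullback_KY n u \<rho>)"

text \<open>A torus invariant prime divisor D_rho dominates Y iff u_rho lies in the kernel of
  the projection, i.e. iff its last coordinate vanishes.\<close>

definition horizontal :: "nat \<Rightarrow> 'i set \<Rightarrow> ('i \<Rightarrow> nat \<Rightarrow> int) \<Rightarrow> ('i \<Rightarrow> real) \<Rightarrow> bool" where
  "horizontal n I u D \<longleftrightarrow> (\<forall>\<rho>\<in>I. D \<rho> \<noteq> 0 \<longrightarrow> u \<rho> (n - 1) = 0)"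

text \<open>Integer matrices acting on Z^n, and toric isomorphisms over Y = P^1: a lattice
  automorphism of N commuting with the projection to the last coordinate and carrying
  the fan of one variety onto the fan of the other.\<close>

definition mat_vec :: "nat \<Rightarrow> (nat \<Rightarrow> nat \<Rightarrow> int) \<Rightarrow> (nat \<Rightarrow> int) \<Rightarrow> (nat \<Rightarrow> int)" where
  "mat_vec n A v = (\<lambda>i. if i < n then (\<Sum>j<n. A i j * v j) else 0)"

definition lattice_aut :: "nat \<Rightarrow> (nat \<Rightarrow> nat \<Rightarrow> int) \<Rightarrow> bool" where
  "lattice_aut n A \<longleftrightarrow> (\<exists>B. (\<forall>i<n. \<forall>k<n. (\<Sum>j<n. A i j * B j k) = (if i = k then 1 else 0)) \<and>
                             (\<forall>i<n. \<forall>k<n. (\<Sum>j<n. B i j * A j k) = (if i = k then 1 else 0)))"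

definition toric_iso_over_P1 ::
  "nat \<Rightarrow> 'i set \<Rightarrow> ('i \<Rightarrow> nat \<Rightarrow> int) \<Rightarrow> 'i set set \<Rightarrow>
          'j set \<Rightarrow> ('j \<Rightarrow> nat \<Rightarrow> int) \<Rightarrow> 'j set set \<Rightarrow> bool" where
  "toric_iso_over_P1 n I u C I' u' C' \<longleftrightarrow>
     (\<exists>A f. lattice_aut n A \<and>
        (\<forall>v. mat_vec n A v (n - 1) = mat_vec n (\<lambda>i j. if i = j then 1 else 0) v (n - 1)) \<and>
        bij_betw f I I' \<and> (\<forall>\<rho>\<in>I. mat_vec n A (u \<rho>) = u' (f \<rho>)) \<and>
        C' = (\<lambda>\<sigma>. f ` \<sigma>) ` C)"

text \<open>N = Z^(r+1); coordinates 0..r-1 are the fibre directions, coordinate r the base.  For c constant this is the product fan of P^r x P^1.\<close>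

datatype bray = Fib nat | Up | Down

definition bundle_rays :: "nat \<Rightarrow> bray set" where
  "bundle_rays r = Fib ` {0..r} \<union> {Up, Down}"

fun bundle_u :: "nat \<Rightarrow> (nat \<Rightarrow> int) \<Rightarrow> bray \<Rightarrow> nat \<Rightarrow> int" where
  "bundle_u r c (Fib i) = (\<lambda>k. if i = 0 then (if k < r then -1 else 0)
                              else (if k + 1 = i then 1 else 0))"
| "bundle_u r c Up = (\<lambda>k. if k = r then 1 else 0)"
| "bundle_u r c Down = (\<lambda>k. if k < r then c (k + 1) - c 0 else if k = r then -1 else 0)"

definition bundle_cones :: "nat \<Rightarrow> bray set set" where
  "bundle_cones r = {insert s (Fib ` ({0..r} - {j})) | s j. s \<in> {Up, Down} \<and> j \<le> r}"

definition product_u :: "nat \<Rightarrow> bray \<Rightarrow> nat \<Rightarrow> int" where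
  "product_u r = bundle_u r (\<lambda>_. 0)"

end

theory Submission
  imports Defs
begin

text \<open>Reading off the coordinates of the wall relations of the bundle fan shows that a curve
  class b satisfies b(Up) = b(Down) and b(Fib i) - b(Fib m) = b(Down) (c m - c i); so N_1(X) has
  rank two, spanned by the class f of a line in a fibre and the class g of the torus invariant
  section over the cone spanned by the Fib i with i \<noteq> m.  Choosing c m minimal, every torus
  invariant curve, hence all of NE(X), has nonnegative coordinates in the basis f, g.  A generator
  z = \<alpha> f + \<beta> g of an extremal ray R therefore has both summands in R.  As \<Delta> is horizontal with
  coefficients < 1, (K_{X/Y} + \<Delta>) . f = \<Sigma>(\<Delta>_i - 1) < 0, which forces \<alpha> = 0, and then
  0 = (K_{X/Y} + \<Delta>) . g = \<Sigma>(1 - \<Delta>_i)(c i - c m) forces all c i to agree: the fan is the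
  product fan.\<close>

lemma card_Fib_image: "card (Fib ` A) = card A"
  by (rule card_image) (simp add: inj_on_def)

lemma bundle_cone_subset: "\<sigma> \<in> bundle_cones r \<Longrightarrow> \<sigma> \<subseteq> bundle_rays r"
  by (auto simp: bundle_cones_def bundle_rays_def)

lemma card_bundle_cone: "\<sigma> \<in> bundle_cones r \<Longrightarrow> card \<sigma> = r + 1"
  by (auto simp: bundle_cones_def card_Fib_image card_insert_if)

lemma sum_bundle_rays:
  "(\<Sum>\<rho>\<in>bundle_rays r. g \<rho>) = (\<Sum>i\<le>r. g (Fib i)) + g Up + g Down"
proof -
  have "(\<Sum>\<rho>\<in>bundle_rays r. g \<rho>) = (\<Sum>\<rho>\<in>Fib ` {..r}. g \<rho>) + (\<Sum>\<rho>\<in>{Up, Down}. g \<rho>)"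
    unfolding bundle_rays_def atLeast0AtMost by (rule sum.union_disjoint) auto
  then show ?thesis by (simp add: sum.reindex inj_on_def add.assoc)
qed

lemma sum_union_bundle_cones:
  assumes "\<sigma> \<in> bundle_cones r" "\<sigma>' \<in> bundle_cones r" "\<forall>\<rho>. \<rho> \<notin> \<sigma> \<union> \<sigma>' \<longrightarrow> g \<rho> = 0"
  shows "(\<Sum>\<rho>\<in>\<sigma> \<union> \<sigma>'. g \<rho>) = (\<Sum>\<rho>\<in>bundle_rays r. g \<rho>)"
  by (rule sum.mono_neutral_left)
     (use assms bundle_cone_subset in \<open>auto simp: bundle_rays_def\<close>)

lemma bundle_u_vanishes_above:
  assumes "\<rho> \<in> bundle_rays r" "r < k"
  shows "bundle_u r c \<rho> k = 0"
  using assms by (cases \<rho>) (auto simp: bundle_rays_def)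

lemma bundle_u_eq_product_u:
  assumes "\<forall>i\<le>r. c i = a"
  shows "bundle_u r c = product_u r"
proof
  fix \<rho> show "bundle_u r c \<rho> = product_u r \<rho>"
    using assms by (cases \<rho>) (auto simp: product_u_def)
qed

lemma bundle_relation_base_coord:
  "(\<Sum>\<rho>\<in>bundle_rays r. b \<rho> * real_of_int (bundle_u r c \<rho> r)) = b Up - b Down"
proof -
  have "(\<Sum>i\<le>r. b (Fib i) * real_of_int (bundle_u r c (Fib i) r)) = 0"
    by (rule sum.neutral) auto
  then show ?thesis by (simp add: sum_bundle_rays)
qed

lemma bundle_relation_fibre_coord:
  assumes "k < r"
  shows "(\<Sum>\<rho>\<in>bundle_rays r. b \<rho> * real_of_int (bundle_u r c \<rho> k))
       = b (Fib (Suc k)) - b (Fib 0) + b Down * real_of_int (c (Suc k) - c 0)"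
proof -
  have "(\<Sum>i\<le>r. b (Fib i) * real_of_int (bundle_u r c (Fib i) k))
      = - b (Fib 0) + (\<Sum>i\<in>{Suc 0..r}. b (Fib i) * real_of_int (bundle_u r c (Fib i) k))"
    using assms by (simp add: atLeast0AtMost[symmetric] sum.atLeast_Suc_atMost)
  also have "(\<Sum>i\<in>{Suc 0..r}. b (Fib i) * real_of_int (bundle_u r c (Fib i) k))
      = (\<Sum>i\<in>{Suc 0..r}. if i = Suc k then b (Fib i) else 0)"
    by (rule sum.cong) auto
  also have "\<dots> = b (Fib (Suc k))" using assms by simp
  finally show ?thesis using assms by (simp add: sum_bundle_rays)
qed

text \<open>Intersection numbers of a line in a fibre, from the wall relation \<Sigma>_i u(Fib i) = 0.\<close>
definition fibre_class :: "nat \<Rightarrow> bray \<Rightarrow> real" where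
  "fibre_class r \<rho> = (case \<rho> of Fib i \<Rightarrow> if i \<le> r then 1 else 0 | _ \<Rightarrow> 0)"

text \<open>Intersection numbers of the torus invariant section V(\<tau>), \<tau> spanned by the Fib i with
  i \<noteq> m, from the wall relation u(Up) + u(Down) + \<Sigma>_i (c m - c i) u(Fib i) = 0.\<close>
definition section_class :: "nat \<Rightarrow> (nat \<Rightarrow> int) \<Rightarrow> nat \<Rightarrow> bray \<Rightarrow> real" where
  "section_class r c m \<rho> =
     (case \<rho> of Fib i \<Rightarrow> if i \<le> r then real_of_int (c m - c i) else 0 | _ \<Rightarrow> 1)"

lemma bundle_relation_iff_decomposition:
  assumes "m \<le> r" and supp: "\<forall>\<rho>. \<rho> \<notin> bundle_rays r \<longrightarrow> b \<rho> = 0"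
  shows "(\<forall>k\<le>r. (\<Sum>\<rho>\<in>bundle_rays r. b \<rho> * real_of_int (bundle_u r c \<rho> k)) = 0) \<longleftrightarrow>
         b = (\<lambda>\<rho>. b (Fib m) * fibre_class r \<rho> + b Down * section_class r c m \<rho>)"
    (is "?rel \<longleftrightarrow> b = ?dec")
proof
  assume rel: ?rel
  have up: "b Up = b Down"
    using rel[rule_format, of r] by (simp add: bundle_relation_base_coord)
  have fib: "b (Fib i) = b (Fib 0) - b Down * real_of_int (c i - c 0)" if "i \<le> r" for i
  proof (cases i)
    case (Suc k)
    with that rel[rule_format, of k] show ?thesis
      by (simp add: bundle_relation_fibre_coord algebra_simps)
  qed simp
  show "b = ?dec"
  proof
    fix \<rho> show "b \<rho> = ?dec \<rho>"
    proof (cases \<rho>)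
      case (Fib i)
      show ?thesis
      proof (cases "i \<le> r")
        case True
        then show ?thesis using Fib fib[of i] fib[of m] \<open>m \<le> r\<close>
          by (simp add: fibre_class_def section_class_def algebra_simps)
      next
        case False
        then have "Fib i \<notin> bundle_rays r" by (auto simp: bundle_rays_def)
        then show ?thesis using Fib False supp by (simp add: fibre_class_def section_class_def)
      qed
    qed (simp_all add: up fibre_class_def section_class_def)
  qed
next
  assume dec: "b = ?dec"
  have fib: "b (Fib i) = b (Fib m) + b Down * real_of_int (c m - c i)" if "i \<le> r" for i
    using fun_cong[OF dec, of "Fib i"] that by (simp add: fibre_class_def section_class_def)
  have up: "b Up = b Down"
    using fun_cong[OF dec, of Up] by (simp add: fibre_class_def section_class_def)
  show ?rel
  proof (intro allI impI)
    fix k assume "k \<le> r"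
    then consider "k < r" | "k = r" by linarith
    then show "(\<Sum>\<rho>\<in>bundle_rays r. b \<rho> * real_of_int (bundle_u r c \<rho> k)) = 0"
    proof cases
      case 1
      then show ?thesis using fib[of "Suc k"] fib[of 0]
        by (simp add: bundle_relation_fibre_coord algebra_simps)
    qed (simp add: bundle_relation_base_coord up)
  qed
qed

lemma bundle_wall_vecI:
  assumes cones: "\<sigma> \<in> bundle_cones r" "\<sigma>' \<in> bundle_cones r" and "card (\<sigma> \<inter> \<sigma>') = r"
    and outside: "\<forall>\<rho>. \<rho> \<notin> \<sigma> \<union> \<sigma>' \<longrightarrow> b \<rho> = 0"
    and "\<forall>\<rho>\<in>\<sigma> - \<sigma>'. b \<rho> = 1" "\<forall>\<rho>\<in>\<sigma>' - \<sigma>. b \<rho> = 1"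
    and rel: "\<forall>k\<le>r. (\<Sum>\<rho>\<in>bundle_rays r. b \<rho> * real_of_int (bundle_u r c \<rho> k)) = 0"
  shows "wall_vec (r + 1) (bundle_u r c) (bundle_cones r) b"
proof -
  have "(\<Sum>\<rho>\<in>\<sigma> \<union> \<sigma>'. b \<rho> * real_of_int (bundle_u r c \<rho> k))
      = (\<Sum>\<rho>\<in>bundle_rays r. b \<rho> * real_of_int (bundle_u r c \<rho> k))" for k
    by (rule sum_union_bundle_cones[OF cones]) (use outside in auto)
  with rel have "\<forall>k<r + 1. (\<Sum>\<rho>\<in>\<sigma> \<union> \<sigma>'. b \<rho> * real_of_int (bundle_u r c \<rho> k)) = 0"
    by simp
  then show ?thesis
    unfolding wall_vec_def using assms card_bundle_cone[OF cones(1)] card_bundle_cone[OF cones(2)]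
    by (intro bexI[of _ \<sigma>] bexI[of _ \<sigma>']) auto
qed

lemma bundle_wall_vecD:
  assumes "wall_vec (r + 1) (bundle_u r c) (bundle_cones r) b"
  shows "\<forall>\<rho>. \<rho> \<notin> bundle_rays r \<longrightarrow> b \<rho> = 0"
    and "\<forall>k\<le>r. (\<Sum>\<rho>\<in>bundle_rays r. b \<rho> * real_of_int (bundle_u r c \<rho> k)) = 0"
    and "0 \<le> b Down"
    and "\<exists>j\<le>r. 0 \<le> b (Fib j)"
proof -
  obtain \<sigma> \<sigma>' where cones: "\<sigma> \<in> bundle_cones r" "\<sigma>' \<in> bundle_cones r"
    and outside: "\<forall>\<rho>. \<rho> \<notin> \<sigma> \<union> \<sigma>' \<longrightarrow> b \<rho> = 0"
    and one: "\<forall>\<rho>\<in>\<sigma> - \<sigma>'. b \<rho> = 1" "\<forall>\<rho>\<in>\<sigma>' - \<sigma>. b \<rho> = 1"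
    and rel: "\<forall>k<r + 1. (\<Sum>\<rho>\<in>\<sigma> \<union> \<sigma>'. b \<rho> * real_of_int (bundle_u r c \<rho> k)) = 0"
    using assms unfolding wall_vec_def by blast
  have nonneg: "0 \<le> b \<rho>" if "\<rho> \<notin> \<sigma> \<inter> \<sigma>'" for \<rho>
    using that outside one by (cases "\<rho> \<in> \<sigma> \<union> \<sigma>'") auto
  show "\<forall>\<rho>. \<rho> \<notin> bundle_rays r \<longrightarrow> b \<rho> = 0"
    using outside bundle_cone_subset[OF cones(1)] bundle_cone_subset[OF cones(2)] by blast
  have "(\<Sum>\<rho>\<in>\<sigma> \<union> \<sigma>'. b \<rho> * real_of_int (bundle_u r c \<rho> k))
      = (\<Sum>\<rho>\<in>bundle_rays r. b \<rho> * real_of_int (bundle_u r c \<rho> k))" for k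
    by (rule sum_union_bundle_cones[OF cones]) (use outside in auto)
  with rel show rel': "\<forall>k\<le>r. (\<Sum>\<rho>\<in>bundle_rays r. b \<rho> * real_of_int (bundle_u r c \<rho> k)) = 0"
    by simp
  obtain j where "j \<le> r" "Fib j \<notin> \<sigma>"
    using cones(1) unfolding bundle_cones_def by auto
  then show "\<exists>j\<le>r. 0 \<le> b (Fib j)" using nonneg by blast
  \<comment> \<open>If Down lies on the common facet, Up lies in neither cone, and b Down = b Up = 0.\<close>
  show "0 \<le> b Down"
  proof (cases "Down \<in> \<sigma> \<inter> \<sigma>'")
    case True
    then have "Up \<notin> \<sigma> \<union> \<sigma>'" using cones by (auto simp: bundle_cones_def)
    moreover have "b Up = b Down"
      using rel'[rule_format, of r] by (simp add: bundle_relation_base_coord)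
    ultimately show ?thesis using outside by simp
  qed (rule nonneg)
qed

lemma bundle_wall_vec_decomposition:
  assumes wall: "wall_vec (r + 1) (bundle_u r c) (bundle_cones r) b"
    and m: "m \<le> r" "\<forall>i\<le>r. c m \<le> c i"
  shows "b = (\<lambda>\<rho>. b (Fib m) * fibre_class r \<rho> + b Down * section_class r c m \<rho>)
         \<and> 0 \<le> b (Fib m) \<and> 0 \<le> b Down"
proof -
  note props = bundle_wall_vecD[OF wall]
  have dec: "b = (\<lambda>\<rho>. b (Fib m) * fibre_class r \<rho> + b Down * section_class r c m \<rho>)"
    using bundle_relation_iff_decomposition[OF m(1) props(1)] props(2) by blast
  obtain j where "j \<le> r" "0 \<le> b (Fib j)" using props(4) by blast
  moreover have "b (Fib j) = b (Fib m) + b Down * real_of_int (c m - c j)"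
    using fun_cong[OF dec, of "Fib j"] \<open>j \<le> r\<close> by (simp add: fibre_class_def section_class_def)
  moreover have "0 \<le> b Down * real_of_int (c j - c m)"
    using props(3) m(2) \<open>j \<le> r\<close> by simp
  ultimately have "0 \<le> b (Fib m)" by (simp add: algebra_simps)
  with dec props(3) show ?thesis by blast
qed

lemma fibre_class_wall_vec:
  assumes "1 \<le> r"
  shows "wall_vec (r + 1) (bundle_u r c) (bundle_cones r) (fibre_class r)"
proof (rule bundle_wall_vecI)
  let ?\<sigma> = "insert Up (Fib ` ({0..r} - {0}))" and ?\<sigma>' = "insert Up (Fib ` ({0..r} - {1}))"
  show "?\<sigma> \<in> bundle_cones r" "?\<sigma>' \<in> bundle_cones r"
    unfolding bundle_cones_def using assms by blast+
  have "?\<sigma> \<inter> ?\<sigma>' = insert Up (Fib ` ({0..r} - {0, 1}))" "Up \<notin> Fib ` ({0..r} - {0, 1})"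
    by auto
  then show "card (?\<sigma> \<inter> ?\<sigma>') = r"
    using assms by (simp add: card_Fib_image card_Diff_subset)
  show "\<forall>\<rho>. \<rho> \<notin> ?\<sigma> \<union> ?\<sigma>' \<longrightarrow> fibre_class r \<rho> = 0"
  proof (intro allI impI)
    fix \<rho> assume "\<rho> \<notin> ?\<sigma> \<union> ?\<sigma>'"
    then show "fibre_class r \<rho> = 0" using assms by (cases \<rho>) (auto simp: fibre_class_def)
  qed
  have "\<forall>\<rho>\<in>Fib ` {0..r}. fibre_class r \<rho> = 1" by (auto simp: fibre_class_def)
  moreover have "?\<sigma> - ?\<sigma>' \<subseteq> Fib ` {0..r}" "?\<sigma>' - ?\<sigma> \<subseteq> Fib ` {0..r}" by auto
  ultimately show "\<forall>\<rho>\<in>?\<sigma> - ?\<sigma>'. fibre_class r \<rho> = 1" "\<forall>\<rho>\<in>?\<sigma>' - ?\<sigma>. fibre_class r \<rho> = 1"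
    by blast+
  have "\<forall>\<rho>. \<rho> \<notin> bundle_rays r \<longrightarrow> fibre_class r \<rho> = 0"
    by (intro allI impI, case_tac \<rho>) (auto simp: fibre_class_def bundle_rays_def)
  moreover have "fibre_class r (Fib 0) = 1" "fibre_class r Down = 0"
    by (simp_all add: fibre_class_def)
  ultimately show "\<forall>k\<le>r. (\<Sum>\<rho>\<in>bundle_rays r. fibre_class r \<rho> * real_of_int (bundle_u r c \<rho> k)) = 0"
    using bundle_relation_iff_decomposition[of 0 r "fibre_class r" c] by simp
qed

lemma section_class_wall_vec:
  assumes "m \<le> r"
  shows "wall_vec (r + 1) (bundle_u r c) (bundle_cones r) (section_class r c m)"
proof (rule bundle_wall_vecI)
  let ?\<sigma> = "insert Up (Fib ` ({0..r} - {m}))" and ?\<sigma>' = "insert Down (Fib ` ({0..r} - {m}))"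
  show "?\<sigma> \<in> bundle_cones r" "?\<sigma>' \<in> bundle_cones r"
    unfolding bundle_cones_def using assms by blast+
  have "?\<sigma> \<inter> ?\<sigma>' = Fib ` ({0..r} - {m})" by auto
  then show "card (?\<sigma> \<inter> ?\<sigma>') = r"
    using assms by (simp add: card_Fib_image)
  show "\<forall>\<rho>. \<rho> \<notin> ?\<sigma> \<union> ?\<sigma>' \<longrightarrow> section_class r c m \<rho> = 0"
  proof (intro allI impI)
    fix \<rho> assume "\<rho> \<notin> ?\<sigma> \<union> ?\<sigma>'"
    then show "section_class r c m \<rho> = 0" by (cases \<rho>) (auto simp: section_class_def)
  qed
  show "\<forall>\<rho>\<in>?\<sigma> - ?\<sigma>'. section_class r c m \<rho> = 1" "\<forall>\<rho>\<in>?\<sigma>' - ?\<sigma>. section_class r c m \<rho> = 1"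
    by (auto simp: section_class_def)
  have "\<forall>\<rho>. \<rho> \<notin> bundle_rays r \<longrightarrow> section_class r c m \<rho> = 0"
    by (intro allI impI, case_tac \<rho>) (auto simp: section_class_def bundle_rays_def)
  moreover have "section_class r c m (Fib m) = 0" "section_class r c m Down = 1"
    using assms by (simp_all add: section_class_def)
  ultimately show
    "\<forall>k\<le>r. (\<Sum>\<rho>\<in>bundle_rays r. section_class r c m \<rho> * real_of_int (bundle_u r c \<rho> k)) = 0"
    using bundle_relation_iff_decomposition[OF assms, of "section_class r c m" c] by simp
qed

lemma cone_gen_decomposition:
  assumes "z \<in> cone_gen G"
    and gens: "\<And>g. g \<in> G \<Longrightarrow> g = (\<lambda>i. g p * e i + g q * e' i) \<and> 0 \<le> g p \<and> 0 \<le> g q"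
  shows "z = (\<lambda>i. z p * e i + z q * e' i) \<and> 0 \<le> z p \<and> 0 \<le> z q"
proof -
  obtain S l where S: "S \<subseteq> G" "\<forall>g\<in>S. 0 \<le> l g" and z: "z = (\<lambda>i. \<Sum>g\<in>S. l g * g i)"
    using assms(1) unfolding cone_gen_def by blast
  have coords: "g i = g p * e i + g q * e' i" "0 \<le> g p" "0 \<le> g q" if "g \<in> S" for g i
  proof -
    from that S(1) have "g \<in> G" by blast
    from gens[OF this] show "0 \<le> g p" "0 \<le> g q" by blast+
    from fun_cong[OF conjunct1[OF gens[OF \<open>g \<in> G\<close>]], of i]
    show "g i = g p * e i + g q * e' i" by (simp only:)
  qed
  have "z i = z p * e i + z q * e' i" for i
  proof -
    have "z i = (\<Sum>g\<in>S. l g * (g p * e i + g q * e' i))"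
      unfolding z using coords(1) by (intro sum.cong refl arg_cong[where f = "times (l _)"])
    also have "\<dots> = (\<Sum>g\<in>S. l g * g p) * e i + (\<Sum>g\<in>S. l g * g q) * e' i"
      by (simp add: sum_distrib_right sum.distrib distrib_left mult.assoc)
    finally show ?thesis unfolding z by simp
  qed
  then have "z = (\<lambda>i. z p * e i + z q * e' i)" by (rule ext)
  moreover have "0 \<le> z p" "0 \<le> z q"
    unfolding z using S(2) coords(2,3) by (auto intro!: sum_nonneg)
  ultimately show ?thesis by blast
qed

lemma scaled_wall_vec_in_NE_cone:
  assumes "wall_vec n u C b" "0 \<le> t"
  shows "(\<lambda>\<rho>. t * b \<rho>) \<in> NE_cone n u C"
  unfolding NE_cone_def cone_gen_def using assms
  by (intro CollectI exI[of _ "{b}"] exI[of _ "\<lambda>_. t"]) auto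

lemma NE_cone_bundle_decomposition:
  assumes "z \<in> NE_cone (r + 1) (bundle_u r c) (bundle_cones r)"
    and "m \<le> r" "\<forall>i\<le>r. c m \<le> c i"
  shows "z = (\<lambda>\<rho>. z (Fib m) * fibre_class r \<rho> + z Down * section_class r c m \<rho>)
         \<and> 0 \<le> z (Fib m) \<and> 0 \<le> z Down"
  using assms(1) unfolding NE_cone_def
  by (rule cone_gen_decomposition) (use bundle_wall_vec_decomposition assms(2,3) in blast)

lemma extremal_ray_bundle_summands:
  assumes "extremal_ray (NE_cone (r + 1) (bundle_u r c) (bundle_cones r)) R"
    and "1 \<le> r" "m \<le> r" "\<forall>i\<le>r. c m \<le> c i"
  obtains \<alpha> \<beta> where "(\<lambda>\<rho>. \<alpha> * fibre_class r \<rho>) \<in> R" "(\<lambda>\<rho>. \<beta> * section_class r c m \<rho>) \<in> R"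
    and "\<alpha> \<noteq> 0 \<or> \<beta> \<noteq> 0"
proof -
  let ?K = "NE_cone (r + 1) (bundle_u r c) (bundle_cones r)"
  obtain z where z: "z \<in> ?K" "z \<noteq> (\<lambda>_. 0)" "R = {(\<lambda>\<rho>. t * z \<rho>) | t. t \<ge> 0}"
    and extremal: "\<forall>a\<in>?K. \<forall>b\<in>?K. (\<lambda>\<rho>. a \<rho> + b \<rho>) \<in> R \<longrightarrow> a \<in> R \<and> b \<in> R"
    using assms(1) unfolding extremal_ray_def by blast
  define \<alpha> \<beta> where "\<alpha> = z (Fib m)" and "\<beta> = z Down"
  have dec: "z = (\<lambda>\<rho>. \<alpha> * fibre_class r \<rho> + \<beta> * section_class r c m \<rho>)" "0 \<le> \<alpha>" "0 \<le> \<beta>"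
    using NE_cone_bundle_decomposition[OF z(1) assms(3,4)] unfolding \<alpha>_def \<beta>_def by blast+
  have "z \<in> R" using z(3) by (auto intro: exI[of _ 1])
  moreover have "(\<lambda>\<rho>. \<alpha> * fibre_class r \<rho>) \<in> ?K" "(\<lambda>\<rho>. \<beta> * section_class r c m \<rho>) \<in> ?K"
    using scaled_wall_vec_in_NE_cone fibre_class_wall_vec[OF assms(2)] section_class_wall_vec[OF assms(3)]
      dec(2,3) by blast+
  ultimately have "(\<lambda>\<rho>. \<alpha> * fibre_class r \<rho>) \<in> R" "(\<lambda>\<rho>. \<beta> * section_class r c m \<rho>) \<in> R"
    using extremal dec(1) by auto
  moreover have "\<alpha> \<noteq> 0 \<or> \<beta> \<noteq> 0" using z(2) dec(1) by auto
  ultimately show thesis by (rule that)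
qed

lemma intersect_scale: "intersect I D (\<lambda>\<rho>. t * z \<rho>) = t * intersect I D z"
  by (simp add: intersect_def sum_distrib_left algebra_simps)

lemma intersect_rel_canonical_horizontal:
  assumes "horizontal (r + 1) (bundle_rays r) (bundle_u r c) \<Delta>"
  shows "intersect (bundle_rays r) (\<lambda>\<rho>. rel_canonical (r + 1) (bundle_u r c) \<rho> + \<Delta> \<rho>) z
       = (\<Sum>i\<le>r. (\<Delta> (Fib i) - 1) * z (Fib i))"
proof -
  have "\<Delta> Up = 0" "\<Delta> Down = 0"
    using assms unfolding horizontal_def bundle_rays_def by auto
  moreover have "rel_canonical (r + 1) (bundle_u r c) Up = 0" "rel_canonical (r + 1) (bundle_u r c) Down = 0"
    by (simp_all add: rel_canonical_def canonical_div_def pullback_KY_def)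
  moreover have "(\<Sum>i\<le>r. (rel_canonical (r + 1) (bundle_u r c) (Fib i) + \<Delta> (Fib i)) * z (Fib i))
      = (\<Sum>i\<le>r. (\<Delta> (Fib i) - 1) * z (Fib i))"
    by (rule sum.cong) (simp_all add: rel_canonical_def canonical_div_def pullback_KY_def)
  ultimately show ?thesis
    unfolding intersect_def sum_bundle_rays by simp
qed

lemma fibre_class_degree_negative:
  assumes "\<forall>i\<le>r. \<Delta> (Fib i) < 1"
  shows "(\<Sum>i\<le>r. (\<Delta> (Fib i) - 1) * fibre_class r (Fib i)) < 0"
proof -
  have "(\<Sum>i\<le>r. (\<Delta> (Fib i) - 1) * fibre_class r (Fib i)) = (\<Sum>i\<le>r. \<Delta> (Fib i) - 1)"
    by (rule sum.cong) (simp_all add: fibre_class_def)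
  also have "\<dots> < (\<Sum>i\<le>r. 0)"
    using assms by (intro sum_strict_mono) auto
  finally show ?thesis by simp
qed

lemma section_class_degree_zero_imp_const:
  assumes less_one: "\<forall>i\<le>r. \<Delta> (Fib i) < 1" and min: "\<forall>i\<le>r. c m \<le> c i"
    and "(\<Sum>i\<le>r. (\<Delta> (Fib i) - 1) * section_class r c m (Fib i)) = 0"
  shows "\<forall>i\<le>r. c i = c m"
proof -
  have "(\<Sum>i\<le>r. (1 - \<Delta> (Fib i)) * real_of_int (c i - c m)) = 0"
    using assms(3) by (simp add: section_class_def algebra_simps)
  moreover have "0 \<le> (1 - \<Delta> (Fib i)) * real_of_int (c i - c m)" if "i \<le> r" for i
    using less_one[rule_format, OF that] min[rule_format, OF that] by simp
  ultimately have "\<forall>i\<in>{..r}. (1 - \<Delta> (Fib i)) * real_of_int (c i - c m) = 0"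
    by (subst sum_nonneg_eq_0_iff[symmetric]) auto
  then show ?thesis using less_one by (auto simp: less_le)
qed

lemma mat_vec_id:
  "mat_vec n (\<lambda>i j. if i = j then 1 else 0) v = (\<lambda>i. if i < n then v i else 0)"
  by (auto simp: mat_vec_def if_distrib[of "\<lambda>x. x * _"] cong: if_cong)

lemma lattice_aut_id: "lattice_aut n (\<lambda>i j. if i = j then 1 else 0)"
  unfolding lattice_aut_def
  by (rule exI[of _ "\<lambda>i j. if i = j then 1 else 0"]) (simp add: if_distrib[of "\<lambda>x. x * _"] cong: if_cong)

lemma toric_iso_over_P1_refl:
  assumes "\<forall>\<rho>\<in>I. \<forall>k\<ge>n. u \<rho> k = 0"
  shows "toric_iso_over_P1 n I u C I u C"
  unfolding toric_iso_over_P1_def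
proof (intro exI conjI)
  show "lattice_aut n (\<lambda>i j. if i = j then 1 else 0)" by (rule lattice_aut_id)
  show "bij_betw id I I" by (rule bij_betw_id)
  show "\<forall>\<rho>\<in>I. mat_vec n (\<lambda>i j. if i = j then 1 else 0) (u \<rho>) = u (id \<rho>)"
    using assms by (auto simp: mat_vec_id not_less)
qed auto

lemma bundle_toric_iso_product_if_const:
  assumes "\<forall>i\<le>r. c i = a"
  shows "toric_iso_over_P1 (r + 1) (bundle_rays r) (bundle_u r c) (bundle_cones r)
                                   (bundle_rays r) (product_u r) (bundle_cones r)"
proof -
  have "\<forall>\<rho>\<in>bundle_rays r. \<forall>k\<ge>r + 1. bundle_u r c \<rho> k = 0"
    using bundle_u_vanishes_above by simp
  then show ?thesis
    using toric_iso_over_P1_refl bundle_u_eq_product_u[OF assms] by metis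
qed

theorem lemma3p2:
  fixes r :: nat and c :: "nat \<Rightarrow> int" and \<Delta> :: "bray \<Rightarrow> real"
    and R :: "(bray \<Rightarrow> real) set"
  assumes "r \<ge> 1"
    and "horizontal (r + 1) (bundle_rays r) (bundle_u r c) \<Delta>"
    and "\<forall>\<rho>\<in>bundle_rays r. 0 \<le> \<Delta> \<rho>"
    and "\<forall>\<rho>\<in>bundle_rays r. \<Delta> \<rho> < 1"
    and "extremal_ray (NE_cone (r + 1) (bundle_u r c) (bundle_cones r)) R"
    and "\<forall>z\<in>R. intersect (bundle_rays r)
                 (\<lambda>\<rho>. rel_canonical (r + 1) (bundle_u r c) \<rho> + \<Delta> \<rho>) z = 0"
  shows "toric_iso_over_P1 (r + 1) (bundle_rays r) (bundle_u r c) (bundle_cones r)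
                                   (bundle_rays r) (product_u r) (bundle_cones r)"
proof -
  let ?D = "\<lambda>\<rho>. rel_canonical (r + 1) (bundle_u r c) \<rho> + \<Delta> \<rho>"
  have less_one: "\<forall>i\<le>r. \<Delta> (Fib i) < 1" using assms(4) by (simp add: bundle_rays_def)
  obtain m where m: "m \<le> r" "\<forall>i\<le>r. c m \<le> c i"
    using ex_is_arg_min_if_finite[of "{..r}" c] unfolding is_arg_min_linorder by auto
  obtain \<alpha> \<beta> where "(\<lambda>\<rho>. \<alpha> * fibre_class r \<rho>) \<in> R" "(\<lambda>\<rho>. \<beta> * section_class r c m \<rho>) \<in> R"
    and nonzero: "\<alpha> \<noteq> 0 \<or> \<beta> \<noteq> 0"
    using extremal_ray_bundle_summands[OF assms(5,1) m] .
  then have "\<alpha> * intersect (bundle_rays r) ?D (fibre_class r) = 0"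
    and "\<beta> * intersect (bundle_rays r) ?D (section_class r c m) = 0"
    using assms(6) by (simp_all add: intersect_scale[symmetric])
  moreover have "intersect (bundle_rays r) ?D (fibre_class r) < 0"
    using fibre_class_degree_negative[OF less_one] intersect_rel_canonical_horizontal[OF assms(2)]
    by simp
  ultimately have "intersect (bundle_rays r) ?D (section_class r c m) = 0"
    using nonzero by auto
  then have "\<forall>i\<le>r. c i = c m"
    using section_class_degree_zero_imp_const[OF less_one m(2)]
      intersect_rel_canonical_horizontal[OF assms(2)] by simp
  then show ?thesis by (rule bundle_toric_iso_product_if_const)
qed

end
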